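(* Let $S$ be a nonempty set of primes and $(a_n(q))_{n\ge1}$ a sequence in $\mathbb{Z}[q]$. Then $a_{p^rm}(q)\equiv a_{p^{r-1}m}(q^p)\pmod{[p^r]_{q^m}}$ holds for all primes $p\in S$ and all integers $m,r\ge1$ with $p\nmid m$ if and only if $\sum_{d\mid n}\mu(d)\,a_{nm/d}(q^d)\equiv0\pmod{[n]_{q^m}}$ for all integers $n\ge1$ divisible only by primes from $S$ and all integers $m\ge1$ coprime to $n$.
   Context: $\mu$ is the Möbius function and $[n]_{q^m}=1+q^m+q^{2m}+\dots+q^{m(n-1)}$; polynomial congruences modulo such polynomials mean divisibility of the difference in $\mathbb{Z}[q]$. *)

theory Defs
  imports "HOL-Computational_Algebra.Computational_Algebra"
begin

definition moebius :: "nat \<Rightarrow> int" where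
  "moebius n = (if squarefree n then (-1) ^ card (prime_factors n) else 0)"

definition subst_pow :: "int poly \<Rightarrow> nat \<Rightarrow> int poly" where
  "subst_pow f k = pcompose f (monom 1 k)"

definition qint :: "nat \<Rightarrow> nat \<Rightarrow> int poly" where
  "qint n m = (\<Sum>i<n. monom 1 (m * i))"

end

theory Submission
  imports Defs
begin

text \<open>
  Write n = p^r n' with p prime, r > 0 and p not dividing n'. Since mu(d) = 0 whenever p^2 | d,
  the Moebius sum for n at m equals the sum over e | n' of mu(e) D(q^e), where D is the
  prime-power congruence difference for p at n'm/e; so it is divisible by [p^r]_{q^(n'm)}.
  The same sum is also the Moebius sum for n' at p^r m minus the one at p^(r-1) m evaluated
  at q^p, hence by induction divisible by [n']_{q^(p^r m)}. Because
  [a]_{q^(bm)} (q^(bm) - 1) = q^(abm) - 1 and any multiple of f (q^k - 1) and of f (q^l - 1)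
  is a multiple of f (q^gcd(k,l) - 1), coprimality of p^r and n' combines the two
  divisibilities into divisibility by [n]_{q^m}. Conversely, for n = p^r the Moebius sum is
  exactly the prime-power congruence difference.
\<close>

lemma qint_conv_sum_power: "qint n m = (\<Sum>i<n. monom 1 m ^ i)"
  by (simp add: qint_def monom_power mult.commute)

lemma qint_1 [simp]: "qint 1 m = 1"
  by (simp add: qint_def)

lemma qint_mult_monom_minus_1: "qint n m * (monom 1 m - 1) = monom 1 (n * m) - 1"
  using power_diff_1_eq[of "monom 1 m :: int poly" n]
  by (simp add: qint_conv_sum_power monom_power mult.commute)

lemma monom_minus_1_dvd:
  "monom 1 k - 1 dvd (monom 1 (j * k) - 1 :: 'a::comm_ring_1 poly)"
  using power_diff_1_eq[of "monom 1 k :: 'a poly" j] by (simp add: monom_power mult.commute)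

lemma monom_minus_1_nonzero:
  assumes "k > 0"
  shows "monom 1 k - 1 \<noteq> (0 :: 'a::comm_ring_1 poly)"
proof
  assume "monom 1 k - 1 = (0 :: 'a poly)"
  then have "coeff (monom 1 k - 1 :: 'a poly) 0 = 0" by simp
  with assms show False by simp
qed

lemma dvd_mult_monom_minus_1_gcd:
  fixes f h :: "'a::comm_ring_1 poly"
  assumes a: "h dvd f * (monom 1 a - 1)" and b: "h dvd f * (monom 1 b - 1)"
  shows "h dvd f * (monom 1 (gcd a b) - 1)"
proof (cases "a = 0")
  case True
  with b show ?thesis by simp
next
  case False
  then obtain u v where uv: "a * u = b * v + gcd a b"
    using bezout_nat[OF False, of b] by blast
  have "h dvd f * (monom 1 (u * a) - 1)"
    using a mult_dvd_mono[OF dvd_refl monom_minus_1_dvd] by (rule dvd_trans)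
  moreover have "h dvd f * (monom 1 (v * b) - 1)"
    using b mult_dvd_mono[OF dvd_refl monom_minus_1_dvd] by (rule dvd_trans)
  ultimately have "h dvd f * (monom 1 (u * a) - 1) - monom 1 (gcd a b) * (f * (monom 1 (v * b) - 1))"
    by simp
  also have "\<dots> = f * (monom 1 (gcd a b) - 1)"
    using uv by (simp add: algebra_simps mult_monom)
  finally show ?thesis .
qed

lemma qint_mult_dvd:
  assumes "coprime k l" "m > 0"
    and "qint l (k * m) dvd f" "qint k (l * m) dvd f"
  shows "qint (k * l) m dvd f"
proof -
  define X where "X = monom 1 (k * l * m) - (1 :: int poly)"
  have "X = qint l (k * m) * (monom 1 (k * m) - 1)"
    unfolding X_def qint_mult_monom_minus_1 by (simp add: mult_ac)
  then have "X dvd f * (monom 1 (k * m) - 1)"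
    using assms(3) by (simp add: mult_dvd_mono)
  moreover have "X = qint k (l * m) * (monom 1 (l * m) - 1)"
    unfolding X_def qint_mult_monom_minus_1 by (simp add: mult_ac)
  then have "X dvd f * (monom 1 (l * m) - 1)"
    using assms(4) by (simp add: mult_dvd_mono)
  ultimately have "X dvd f * (monom 1 (gcd (k * m) (l * m)) - 1)"
    by (rule dvd_mult_monom_minus_1_gcd)
  also have "gcd (k * m) (l * m) = m"
    using assms(1) by (simp add: gcd_mult_right coprime_iff_gcd_eq_1 gcd.commute)
  finally have "qint (k * l) m * (monom 1 m - 1) dvd f * (monom 1 m - 1)"
    by (simp add: X_def qint_mult_monom_minus_1)
  with monom_minus_1_nonzero[OF assms(2), where 'a = int] show ?thesis
    by simp
qed

lemma subst_pow_monom: "subst_pow (monom c j) k = monom c (j * k)"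
  by (simp add: subst_pow_def pcompose_altdef map_poly_monom poly_monom monom_power
      smult_monom mult.commute)

lemma subst_pow_1 [simp]: "subst_pow f 1 = f"
  by (simp add: subst_pow_def monom_altdef)

lemma subst_pow_mult: "subst_pow (f * g) k = subst_pow f k * subst_pow g k"
  by (simp add: subst_pow_def pcompose_mult)

lemma subst_pow_diff: "subst_pow (f - g) k = subst_pow f k - subst_pow g k"
  by (simp add: subst_pow_def pcompose_diff)

lemma subst_pow_smult: "subst_pow (smult c f) k = smult c (subst_pow f k)"
  by (simp add: subst_pow_def pcompose_smult)

lemma subst_pow_sum: "subst_pow (\<Sum>i\<in>A. f i) k = (\<Sum>i\<in>A. subst_pow (f i) k)"
  by (simp add: subst_pow_def pcompose_sum)

lemma subst_pow_subst_pow: "subst_pow (subst_pow f j) k = subst_pow f (j * k)"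
  using subst_pow_monom[of 1 j k] by (simp add: subst_pow_def flip: pcompose_assoc)

lemma subst_pow_dvd: "f dvd g \<Longrightarrow> subst_pow f k dvd subst_pow g k"
  by (metis dvd_def subst_pow_mult)

lemma subst_pow_qint: "subst_pow (qint n m) k = qint n (m * k)"
  by (simp add: qint_def subst_pow_sum subst_pow_monom mult_ac)

lemma moebius_eq_0I: "x ^ 2 dvd n \<Longrightarrow> x \<noteq> 1 \<Longrightarrow> moebius n = 0"
  using not_squarefreeI[of x n] by (simp add: moebius_def)

lemma moebius_prime_mult:
  assumes "prime p" "\<not> p dvd n"
  shows "moebius (p * n) = - moebius n"
proof (cases "n = 0")
  case False
  have "coprime p n"
    using assms by (simp add: prime_imp_coprime)
  then have "squarefree (p * n) \<longleftrightarrow> squarefree n"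
    using assms(1) squarefree_mult_coprime squarefree_multD squarefree_prime_elem by blast
  moreover have "prime_factors (p * n) = insert p (prime_factors n)"
    using assms False by (simp add: prime_factors_product prime_prime_factors prime_gt_0_nat)
  moreover have "p \<notin> prime_factors n"
    using assms(2) by auto
  ultimately show ?thesis
    by (simp add: moebius_def)
qed (simp add: moebius_def)

lemma sum_divisors_prime_power_mult:
  fixes f :: "nat \<Rightarrow> 'a::comm_monoid_add"
  assumes p: "prime p" "\<not> p dvd n" and "r > 0" "n > 0"
    and vanish: "\<And>d. p ^ 2 dvd d \<Longrightarrow> f d = 0"
  shows "(\<Sum>d | d dvd p ^ r * n. f d) = (\<Sum>e | e dvd n. f e + f (p * e))"
proof -
  let ?D = "{e. e dvd n}"
  have fin: "finite ?D"
    using \<open>n > 0\<close> by simp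
  have p_dvd_p_pow: "p dvd p ^ r"
    using \<open>r > 0\<close> by (simp add: dvd_power)
  have "(\<Sum>d | d dvd p ^ r * n. f d) = (\<Sum>d \<in> ?D \<union> (*) p ` ?D. f d)"
  proof (rule sum.mono_neutral_right)
    show "finite {d. d dvd p ^ r * n}"
      using p \<open>n > 0\<close> by (simp add: prime_gt_0_nat)
    show "?D \<union> (*) p ` ?D \<subseteq> {d. d dvd p ^ r * n}"
      using p_dvd_p_pow by (auto intro: mult_dvd_mono)
    show "\<forall>d \<in> {d. d dvd p ^ r * n} - (?D \<union> (*) p ` ?D). f d = 0"
    proof
      fix d assume d: "d \<in> {d. d dvd p ^ r * n} - (?D \<union> (*) p ` ?D)"
      have "p dvd d"
      proof (rule ccontr)
        assume "\<not> p dvd d"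
        then have "coprime d (p ^ r)"
          using p(1) prime_imp_coprime coprime_commute coprime_power_right_iff by blast
        with d have "d dvd n"
          using coprime_dvd_mult_right_iff by blast
        with d show False by blast
      qed
      then obtain k where k: "d = p * k" ..
      show "f d = 0"
      proof (cases "p dvd k")
        case True
        then show ?thesis
          using k vanish by (simp add: power2_eq_square)
      next
        case False
        have "p ^ r * n = p * (p ^ (r - 1) * n)"
          using \<open>r > 0\<close> by (simp add: power_eq_if)
        with d k p have "k dvd p ^ (r - 1) * n"
          by (simp add: prime_gt_0_nat)
        moreover have "coprime k (p ^ (r - 1))"
          using p(1) False prime_imp_coprime coprime_commute coprime_power_right_iff by blast
        ultimately have "k dvd n"
          using coprime_dvd_mult_right_iff by blast
        with d k show ?thesis by auto
      qed
    qed
  qed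
  also have "\<dots> = (\<Sum>e \<in> ?D. f e) + (\<Sum>d \<in> (*) p ` ?D. f d)"
    using fin p(2) by (intro sum.union_disjoint) (auto dest: dvd_mult_left)
  also have "(\<Sum>d \<in> (*) p ` ?D. f d) = (\<Sum>e \<in> ?D. f (p * e))"
    using p by (intro sum.reindex_cong[where l = "(*) p"]) (auto simp: inj_on_def prime_gt_0_nat)
  finally show ?thesis
    by (simp add: sum.distrib)
qed

lemma sum_divisors_moebius_prime_power_mult:
  fixes F :: "nat \<Rightarrow> int poly"
  assumes p: "prime p" "\<not> p dvd n" and "r > 0" "n > 0"
  shows "(\<Sum>d | d dvd p ^ r * n. smult (moebius d) (F d))
       = (\<Sum>e | e dvd n. smult (moebius e) (F e - F (p * e)))"
proof -
  have "(\<Sum>d | d dvd p ^ r * n. smult (moebius d) (F d))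
      = (\<Sum>e | e dvd n. smult (moebius e) (F e) + smult (moebius (p * e)) (F (p * e)))"
    using assms moebius_eq_0I[of p] not_prime_1
    by (intro sum_divisors_prime_power_mult) auto
  also have "\<dots> = (\<Sum>e | e dvd n. smult (moebius e) (F e - F (p * e)))"
  proof (rule sum.cong)
    fix e assume "e \<in> {e. e dvd n}"
    with p have "moebius (p * e) = - moebius e"
      by (metis mem_Collect_eq dvd_trans moebius_prime_mult)
    then show "smult (moebius e) (F e) + smult (moebius (p * e)) (F (p * e))
             = smult (moebius e) (F e - F (p * e))"
      by (simp add: smult_diff_right)
  qed simp
  finally show ?thesis .
qed

definition moebius_sum :: "(nat \<Rightarrow> int poly) \<Rightarrow> nat \<Rightarrow> nat \<Rightarrow> int poly" where
  "moebius_sum a n m = (\<Sum>d | d dvd n. smult (moebius d) (subst_pow (a (n * m div d)) d))"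

lemma moebius_sum_1 [simp]: "moebius_sum a 1 m = a m"
proof -
  have "{d. d dvd (1::nat)} = {1}"
    by auto
  then show ?thesis
    by (simp add: moebius_sum_def moebius_def del: One_nat_def)
qed

lemma moebius_sum_altdef:
  "moebius_sum a n m = (\<Sum>d | d dvd n. smult (moebius d) (subst_pow (a (n div d * m)) d))"
  unfolding moebius_sum_def by (intro sum.cong) (auto simp: dvd_div_mult)

lemma moebius_sum_prime_power_mult:
  assumes "prime p" "\<not> p dvd n" "r > 0" "n > 0"
  shows "moebius_sum a (p ^ r * n) m = (\<Sum>e | e dvd n. smult (moebius e)
           (subst_pow (a (p ^ r * (n div e * m)) - subst_pow (a (p ^ (r - 1) * (n div e * m))) p) e))"
  unfolding moebius_sum_def sum_divisors_moebius_prime_power_mult[OF assms]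
proof (rule sum.cong)
  fix e assume "e \<in> {e. e dvd n}"
  then obtain c where c: "n = e * c" by auto
  with assms have "e > 0" "p > 0"
    by (auto simp: prime_gt_0_nat)
  moreover have "p ^ r * n * m = (p * e) * (p ^ (r - 1) * (c * m))"
    using c \<open>r > 0\<close> by (simp add: power_eq_if mult_ac)
  ultimately have "p ^ r * n * m div (p * e) = p ^ (r - 1) * (c * m)"
    by (metis nonzero_mult_div_cancel_left mult_pos_pos less_not_refl2)
  moreover have "p ^ r * n * m div e = p ^ r * (c * m)"
    using c \<open>e > 0\<close> by (simp add: mult_ac)
  ultimately show "smult (moebius e) (subst_pow (a (p ^ r * n * m div e)) e
        - subst_pow (a (p ^ r * n * m div (p * e))) (p * e))
      = smult (moebius e) (subst_pow (a (p ^ r * (n div e * m))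
        - subst_pow (a (p ^ (r - 1) * (n div e * m))) p) e)"
    using c \<open>e > 0\<close> by (simp add: subst_pow_diff subst_pow_subst_pow)
qed simp

lemma moebius_sum_prime_power_mult_diff:
  assumes "prime p" "\<not> p dvd n" "r > 0" "n > 0"
  shows "moebius_sum a (p ^ r * n) m
       = moebius_sum a n (p ^ r * m) - subst_pow (moebius_sum a n (p ^ (r - 1) * m)) p"
  unfolding moebius_sum_prime_power_mult[OF assms]
  by (simp add: moebius_sum_altdef subst_pow_sum
      subst_pow_smult subst_pow_diff subst_pow_subst_pow smult_diff_right sum_subtractf mult_ac)

lemma moebius_sum_prime_power:
  assumes "prime p" "r > 0"
  shows "moebius_sum a (p ^ r) m = a (p ^ r * m) - subst_pow (a (p ^ (r - 1) * m)) p"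
  using moebius_sum_prime_power_mult_diff[of p 1 r a m] assms
  by (simp add: not_prime_unit del: One_nat_def)

lemma qint_dvd_moebius_sum_prime_power_mult:
  assumes p: "prime p" "\<not> p dvd n" "\<not> p dvd m" and "r > 0" "n > 0" "m > 0" "coprime m n"
    and cong_p: "\<And>k. k > 0 \<Longrightarrow> \<not> p dvd k \<Longrightarrow>
           qint (p ^ r) k dvd a (p ^ r * k) - subst_pow (a (p ^ (r - 1) * k)) p"
    and cong_n: "\<And>k. k > 0 \<Longrightarrow> coprime k n \<Longrightarrow> qint n k dvd moebius_sum a n k"
  shows "qint (p ^ r * n) m dvd moebius_sum a (p ^ r * n) m"
proof (rule qint_mult_dvd)
  have coprime_p_n: "coprime (p ^ k) n" for k
    using p by (simp add: prime_imp_coprime)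
  then show "coprime (p ^ r) n" .
  show "m > 0" by fact
  have "qint n (p ^ r * m) dvd moebius_sum a n (p ^ r * m)"
    using coprime_p_n assms by (intro cong_n) (auto simp: prime_gt_0_nat)
  moreover have "qint n (p ^ r * m) dvd subst_pow (moebius_sum a n (p ^ (r - 1) * m)) p"
  proof -
    have "qint n (p ^ (r - 1) * m) dvd moebius_sum a n (p ^ (r - 1) * m)"
      using coprime_p_n assms by (intro cong_n) (auto simp: prime_gt_0_nat)
    then have "subst_pow (qint n (p ^ (r - 1) * m)) p dvd subst_pow (moebius_sum a n (p ^ (r - 1) * m)) p"
      by (rule subst_pow_dvd)
    then show ?thesis
      using \<open>r > 0\<close> by (simp add: subst_pow_qint power_eq_if mult_ac)
  qed
  ultimately show "qint n (p ^ r * m) dvd moebius_sum a (p ^ r * n) m"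
    unfolding moebius_sum_prime_power_mult_diff[OF p(1,2) \<open>r > 0\<close> \<open>n > 0\<close>] by (rule dvd_diff)
  show "qint (p ^ r) (n * m) dvd moebius_sum a (p ^ r * n) m"
    unfolding moebius_sum_prime_power_mult[OF p(1,2) \<open>r > 0\<close> \<open>n > 0\<close>]
  proof (intro dvd_sum dvd_smult)
    fix e assume "e \<in> {e. e dvd n}"
    then obtain c where c: "n = e * c" by auto
    with assms have "c > 0" "\<not> p dvd c * m"
      by (auto simp: prime_dvd_mult_iff)
    then have "subst_pow (qint (p ^ r) (c * m)) e dvd subst_pow (a (p ^ r * (c * m))
                 - subst_pow (a (p ^ (r - 1) * (c * m))) p) e"
      using cong_p[of "c * m"] \<open>m > 0\<close> by (intro subst_pow_dvd) simp
    moreover have "subst_pow (qint (p ^ r) (c * m)) e = qint (p ^ r) (n * m)"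
      using c by (simp add: subst_pow_qint mult_ac)
    ultimately show "qint (p ^ r) (n * m) dvd subst_pow (a (p ^ r * (n div e * m))
                 - subst_pow (a (p ^ (r - 1) * (n div e * m))) p) e"
      using c \<open>n > 0\<close> by auto
  qed
qed

lemma qint_dvd_moebius_sum:
  assumes "n > 0" "m > 0" "coprime m n"
    and "\<And>p k r. prime p \<Longrightarrow> p dvd n \<Longrightarrow> k > 0 \<Longrightarrow> r > 0 \<Longrightarrow> \<not> p dvd k \<Longrightarrow>
           qint (p ^ r) k dvd a (p ^ r * k) - subst_pow (a (p ^ (r - 1) * k)) p"
  shows "qint n m dvd moebius_sum a n m"
  using assms
proof (induction n arbitrary: m rule: less_induct)
  case (less n)
  show ?case
  proof (cases "n = 1")
    case False
    then obtain p where p: "prime p" "p dvd n"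
      using prime_factor_nat by blast
    have "\<not> is_unit p"
      using p(1) not_prime_unit by blast
    moreover have "n \<noteq> 0"
      using less.prems by simp
    ultimately obtain n' where n': "n = p ^ multiplicity p n * n'" "\<not> p dvd n'"
      using multiplicity_decompose'[of n p] by blast
    define r where "r = multiplicity p n"
    have n_eq: "n = p ^ r * n'"
      unfolding r_def by (rule n'(1))
    have "r > 0"
      using p \<open>n \<noteq> 0\<close> by (simp add: r_def prime_multiplicity_gt_zero_iff)
    have "p ^ r > 1"
      using p(1) \<open>r > 0\<close> prime_gt_1_nat one_less_power by blast
    then have "n' < n" "n' > 0"
      using n_eq \<open>n \<noteq> 0\<close> by auto
    have "\<not> p dvd m"
      using less.prems p by (metis coprime_common_divisor not_prime_unit)
    show ?thesis
      unfolding n_eq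
    proof (rule qint_dvd_moebius_sum_prime_power_mult[OF p(1) n'(2) \<open>\<not> p dvd m\<close> \<open>r > 0\<close> \<open>n' > 0\<close>])
      show "coprime m n'"
        using less.prems n_eq by simp
      show "qint (p ^ r) k dvd a (p ^ r * k) - subst_pow (a (p ^ (r - 1) * k)) p"
        if "k > 0" "\<not> p dvd k" for k
        using less.prems p that \<open>r > 0\<close> by blast
      show "qint n' k dvd moebius_sum a n' k" if "k > 0" "coprime k n'" for k
        using less.IH[OF \<open>n' < n\<close> \<open>n' > 0\<close> that] less.prems n_eq by auto
    qed (use less.prems in auto)
  qed (simp del: One_nat_def)
qed

theorem theorem8:
  fixes S :: "nat set" and a :: "nat \<Rightarrow> int poly"
  assumes "S \<noteq> {}" and "\<forall>p\<in>S. prime p"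
  shows "(\<forall>p\<in>S. \<forall>m r. m \<ge> 1 \<longrightarrow> r \<ge> 1 \<longrightarrow> \<not> p dvd m \<longrightarrow>
            qint (p ^ r) m dvd (a (p ^ r * m) - subst_pow (a (p ^ (r - 1) * m)) p))
    \<longleftrightarrow>
         (\<forall>n m. n \<ge> 1 \<longrightarrow> (\<forall>p. prime p \<longrightarrow> p dvd n \<longrightarrow> p \<in> S) \<longrightarrow> m \<ge> 1 \<longrightarrow> coprime m n \<longrightarrow>
            qint n m dvd (\<Sum>d | d dvd n. smult (moebius d) (subst_pow (a (n * m div d)) d)))"
  (is "?cong \<longleftrightarrow> ?moebius")
proof
  assume ?cong
  then show ?moebius
    unfolding moebius_sum_def[symmetric] by (auto intro!: qint_dvd_moebius_sum)
next
  assume ?moebius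
  then have moebius: "qint n m dvd moebius_sum a n m"
    if "n \<ge> 1" "\<forall>p. prime p \<longrightarrow> p dvd n \<longrightarrow> p \<in> S" "m \<ge> 1" "coprime m n" for n m
    using that by (simp add: moebius_sum_def)
  show ?cong
  proof (intro ballI allI impI)
    fix p m r :: nat
    assume "p \<in> S" "m \<ge> 1" "r \<ge> 1" "\<not> p dvd m"
    moreover have "prime p"
      using \<open>p \<in> S\<close> assms(2) by blast
    moreover have "coprime m (p ^ r)"
      using calculation prime_imp_coprime coprime_commute coprime_power_right_iff by blast
    ultimately have "qint (p ^ r) m dvd moebius_sum a (p ^ r) m"
      by (intro moebius) (auto simp: prime_gt_0_nat Suc_le_eq dest: prime_dvd_power primes_dvd_imp_eq)
    with \<open>prime p\<close> \<open>r \<ge> 1\<close> show "qint (p ^ r) m dvd a (p ^ r * m) - subst_pow (a (p ^ (r - 1) * m)) p"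
      by (simp add: moebius_sum_prime_power)
  qed
qed

end
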